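(* Let $\mathcal{C}$ be a finite collection of pairwise disjoint closed circular discs in $\mathbb{R}^2$, and let $T_1,\dots,T_m$ be triples of discs from $\mathcal{C}$, each with non-collinear centers, with feasible regions $F_1,\dots,F_m$. Then every point $q\in F_1\cap\cdots\cap F_m$ illuminates all objective arcs of all the triples $T_1,\dots,T_m$: for each $t$ and each point $p$ on an objective arc of a disc of $T_t$, the open segment from $q$ to $p$ does not meet the interior of any disc of $T_t$.
   Context: For two disjoint closed discs $C_a, C_b$ with centers $c_a,c_b$, let $p_a, p_b$ be the points where the segment $\overline{c_ac_b}$ meets the boundary circles of $C_a$ and $C_b$ respectively, and let $l_a, l_b$ be the lines through $p_a$, $p_b$ perpendicular to $\overline{c_ac_b}$. The slab $S_{a,b}$ is the closed region between the parallel lines $l_a$ and $l_b$. For three pairwise disjoint discs $C_i,C_j,C_k$, the feasible region is $S_{i,j}\cap S_{j,k}\cap S_{i,k}$. Objective arcs of a triple $C_i,C_j,C_k$ with non-collinear centers $c_i,c_j,c_k$: on $C_i$, the edges $\overline{c_ic_j}$ and $\overline{c_ic_k}$ meet the boundary circle of $C_i$ in two points, and the objective arc of $C_i$ is the arc between these two points of length less than half the circumference; similarly for $C_j$, $C_k$. *)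

theory Defs
  imports "HOL-Analysis.Analysis"
begin

type_synonym disc = "(real^2) \<times> real"

definition disc_set :: "disc \<Rightarrow> (real^2) set" where
  "disc_set D = cball (fst D) (snd D)"

definition disc_interior :: "disc \<Rightarrow> (real^2) set" where
  "disc_interior D = ball (fst D) (snd D)"

text \<open>Slab S_{a,b}: closed region between the lines through p_a and p_b
  perpendicular to the segment c_a c_b.\<close>
definition slab :: "disc \<Rightarrow> disc \<Rightarrow> (real^2) set" where
  "slab A B =
    (let ca = fst A; cb = fst B; u = cb - ca;
         pa = ca + (snd A / norm u) *\<^sub>R u;
         pb = cb - (snd B / norm u) *\<^sub>R u
     in {x. min (pa \<bullet> u) (pb \<bullet> u) \<le> x \<bullet> u \<and> x \<bullet> u \<le> max (pa \<bullet> u) (pb \<bullet> u)})"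

definition feasible_region :: "disc \<Rightarrow> disc \<Rightarrow> disc \<Rightarrow> (real^2) set" where
  "feasible_region A B C = slab A B \<inter> slab B C \<inter> slab A C"

text \<open>Objective arc of disc A in the triple (A,B,C): the shorter arc of the boundary
  circle of A between the points where the segments c_A c_B and c_A c_C cross it.
  For non-collinear centres this is the part of the circle inside the (convex, angle < pi)
  cone at c_A spanned by c_B - c_A and c_C - c_A.\<close>
definition objective_arc :: "disc \<Rightarrow> disc \<Rightarrow> disc \<Rightarrow> (real^2) set" where
  "objective_arc A B C =
     sphere (fst A) (snd A) \<inter>
     {fst A + a *\<^sub>R (fst B - fst A) + b *\<^sub>R (fst C - fst A) | a b. a \<ge> 0 \<and> b \<ge> 0}"

definition triple_discs :: "disc \<times> disc \<times> disc \<Rightarrow> disc set" where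
  "triple_discs T = {fst T, fst (snd T), snd (snd T)}"

definition triple_arcs :: "disc \<times> disc \<times> disc \<Rightarrow> (real^2) set" where
  "triple_arcs T = (case T of (A, B, C) \<Rightarrow>
     objective_arc A B C \<union> objective_arc B A C \<union> objective_arc C A B)"

definition triple_feasible :: "disc \<times> disc \<times> disc \<Rightarrow> (real^2) set" where
  "triple_feasible T = (case T of (A, B, C) \<Rightarrow> feasible_region A B C)"

end

theory Submission
  imports Defs
begin

text \<open>For disjoint discs the slab \<open>S\<^sub>a\<^sub>,\<^sub>b\<close> lies in the two closed half-planes bounded by
  the tangent lines of \<open>C\<^sub>a\<close> and \<open>C\<^sub>b\<close> that face each other; each is convex and misses the open
  disc it touches. A point \<open>p\<close> on the objective arc of \<open>C\<^sub>a\<close> lies in \<open>C\<^sub>a\<close>, hence in the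
  half-planes of \<open>C\<^sub>b\<close> and \<open>C\<^sub>c\<close> facing \<open>C\<^sub>a\<close>, which also contain \<open>q\<close>; so the segment
  \<open>qp\<close> avoids the interiors of \<open>C\<^sub>b\<close> and \<open>C\<^sub>c\<close>. Since \<open>p - c\<^sub>a\<close> is a nonnegative combination
  of \<open>c\<^sub>b - c\<^sub>a\<close> and \<open>c\<^sub>c - c\<^sub>a\<close>, the two half-planes of \<open>C\<^sub>a\<close> containing \<open>q\<close> force \<open>q\<close> into
  the tangent half-plane of \<open>C\<^sub>a\<close> at \<open>p\<close>, which contains \<open>p\<close> as well.\<close>

definition tangent_halfspace :: "'a::real_inner \<Rightarrow> real \<Rightarrow> 'a \<Rightarrow> 'a set" where
  "tangent_halfspace a r u = {x. r * norm u \<le> (x - a) \<bullet> u}"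

lemma convex_tangent_halfspace: "convex (tangent_halfspace a r u)"
proof -
  have "(x - a) \<bullet> u = inner u x - a \<bullet> u" for x
    by (simp add: inner_diff_left inner_commute[of u x])
  then have "tangent_halfspace a r u = {x. inner u x \<ge> r * norm u + a \<bullet> u}"
    by (auto simp: tangent_halfspace_def)
  then show ?thesis by (simp add: convex_halfspace_ge)
qed

lemma ball_Int_tangent_halfspace:
  assumes "u \<noteq> 0"
  shows "ball a r \<inter> tangent_halfspace a r u = {}"
proof -
  have "(x - a) \<bullet> u < r * norm u" if "dist a x < r" for x
  proof -
    have "(x - a) \<bullet> u \<le> norm (x - a) * norm u" by (rule norm_cauchy_schwarz)
    also have "\<dots> < r * norm u"
      using that assms by (simp add: dist_norm norm_minus_commute)
    finally show ?thesis .
  qed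
  then show ?thesis by (force simp: tangent_halfspace_def)
qed

lemma open_segment_Int_ball_eq_empty_if_tangent_halfspace:
  assumes "u \<noteq> 0" "x \<in> tangent_halfspace a r u" "y \<in> tangent_halfspace a r u"
  shows "open_segment x y \<inter> ball a r = {}"
proof -
  have "open_segment x y \<subseteq> tangent_halfspace a r u"
    using assms convex_tangent_halfspace closed_segment_subset segment_open_subset_closed by blast
  then show ?thesis using ball_Int_tangent_halfspace[OF assms(1)] by blast
qed

lemma sphere_point_in_tangent_halfspace:
  assumes "p \<in> sphere a r"
  shows "p \<in> tangent_halfspace a r (p - a)"
  using assms
  by (simp add: tangent_halfspace_def dist_norm norm_minus_commute
      flip: power2_norm_eq_inner power2_eq_square)

lemma tangent_halfspace_cone:
  assumes "r \<ge> 0" "\<alpha> \<ge> 0" "\<beta> \<ge> 0"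
    and "x \<in> tangent_halfspace a r u" "x \<in> tangent_halfspace a r v"
  shows "x \<in> tangent_halfspace a r (\<alpha> *\<^sub>R u + \<beta> *\<^sub>R v)"
proof -
  have "r * norm (\<alpha> *\<^sub>R u + \<beta> *\<^sub>R v) \<le> r * (\<alpha> * norm u + \<beta> * norm v)"
    using assms(1-3) norm_triangle_ineq[of "\<alpha> *\<^sub>R u" "\<beta> *\<^sub>R v"] by (intro mult_left_mono) auto
  also have "\<dots> = \<alpha> * (r * norm u) + \<beta> * (r * norm v)" by (simp add: algebra_simps)
  also have "\<dots> \<le> \<alpha> * ((x - a) \<bullet> u) + \<beta> * ((x - a) \<bullet> v)"
    using assms by (intro add_mono mult_left_mono) (auto simp: tangent_halfspace_def)
  also have "\<dots> = (x - a) \<bullet> (\<alpha> *\<^sub>R u + \<beta> *\<^sub>R v)" by (simp add: inner_add_right)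
  finally show ?thesis by (simp add: tangent_halfspace_def)
qed

lemma cball_subset_tangent_halfspace:
  assumes "ra + rb \<le> norm (b - a)"
  shows "cball b rb \<subseteq> tangent_halfspace a ra (b - a)"
proof
  fix p assume "p \<in> cball b rb"
  then have "norm (p - b) \<le> rb" by (simp add: dist_norm norm_minus_commute)
  have "ra * norm (b - a) \<le> norm (b - a) * norm (b - a) - rb * norm (b - a)"
    using mult_right_mono[OF assms norm_ge_zero] by (simp add: algebra_simps)
  also have "\<dots> \<le> (b - a) \<bullet> (b - a) - norm (p - b) * norm (b - a)"
    using \<open>norm (p - b) \<le> rb\<close>
    by (simp add: mult_right_mono flip: power2_norm_eq_inner power2_eq_square)
  also have "\<dots> \<le> (b - a) \<bullet> (b - a) + (p - b) \<bullet> (b - a)"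
    using Cauchy_Schwarz_ineq2[of "p - b" "b - a"] by simp
  also have "\<dots> = (p - a) \<bullet> (b - a)" by (simp add: algebra_simps inner_diff_left)
  finally show "p \<in> tangent_halfspace a ra (b - a)" by (simp add: tangent_halfspace_def)
qed

lemma norm_diff_ge_if_cballs_disjoint:
  fixes a b :: "'a::real_normed_vector"
  assumes "cball a ra \<inter> cball b rb = {}" "ra \<ge> 0" "rb \<ge> 0"
  shows "ra + rb \<le> norm (b - a)"
proof (rule ccontr)
  assume short: "\<not> ?thesis"
  then have "ra + rb > 0" using norm_ge_zero[of "b - a"] by linarith
  define s where "s = ra / (ra + rb)"
  define y where "y = a + s *\<^sub>R (b - a)"
  have s: "0 \<le> s" "s \<le> 1" "1 - s = rb / (ra + rb)"
    using assms(2,3) \<open>ra + rb > 0\<close> by (auto simp: s_def field_simps)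
  have "dist a y = s * norm (b - a)" using s by (simp add: y_def dist_norm)
  also have "\<dots> \<le> s * (ra + rb)" using short s by (intro mult_left_mono) auto
  finally have "y \<in> cball a ra" using \<open>ra + rb > 0\<close> by (simp add: s_def)
  have "b - y = (1 - s) *\<^sub>R (b - a)" by (simp add: y_def algebra_simps)
  then have "dist b y = (1 - s) * norm (b - a)" using s(2) by (simp add: dist_norm)
  also have "\<dots> \<le> (1 - s) * (ra + rb)" using short s by (intro mult_left_mono) auto
  finally have "y \<in> cball b rb" using \<open>ra + rb > 0\<close> by (simp add: s)
  with \<open>y \<in> cball a ra\<close> assms(1) show False by blast
qed

lemma slab_subset_tangent_halfspaces:
  assumes "a \<noteq> b" "ra + rb \<le> norm (b - a)"
  shows "slab (a, ra) (b, rb) \<subseteq> tangent_halfspace a ra (b - a) \<inter> tangent_halfspace b rb (a - b)"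
proof
  fix x assume x: "x \<in> slab (a, ra) (b, rb)"
  define u where "u = b - a"
  have "norm u > 0" using assms(1) by (simp add: u_def)
  have uu: "u \<bullet> u = norm u * norm u" by (simp add: dot_square_norm power2_eq_square)
  have pa: "(a + (ra / norm u) *\<^sub>R u) \<bullet> u = a \<bullet> u + ra * norm u"
    and pb: "(b - (rb / norm u) *\<^sub>R u) \<bullet> u = b \<bullet> u - rb * norm u"
    using \<open>norm u > 0\<close> uu by (simp_all add: inner_add_left inner_diff_left)
  have "(ra + rb) * norm u \<le> norm u * norm u"
    using mult_right_mono[OF assms(2) norm_ge_zero] by (simp add: u_def)
  moreover have "b \<bullet> u - a \<bullet> u = norm u * norm u"
    using uu by (simp add: u_def flip: inner_diff_left)
  ultimately have "a \<bullet> u + ra * norm u \<le> b \<bullet> u - rb * norm u" by (simp add: algebra_simps)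
  then have "a \<bullet> u + ra * norm u \<le> x \<bullet> u \<and> x \<bullet> u \<le> b \<bullet> u - rb * norm u"
    using x unfolding slab_def Let_def by (simp add: u_def[symmetric] pa pb min_def max_def split: if_splits)
  moreover have "(x - a) \<bullet> (b - a) = x \<bullet> u - a \<bullet> u" "(x - b) \<bullet> (a - b) = b \<bullet> u - x \<bullet> u"
    by (simp_all add: u_def algebra_simps inner_diff_left inner_diff_right inner_commute)
  moreover have "norm (a - b) = norm u" "norm (b - a) = norm u" by (simp_all add: u_def norm_minus_commute)
  ultimately show "x \<in> tangent_halfspace a ra (b - a) \<inter> tangent_halfspace b rb (a - b)"
    by (simp add: tangent_halfspace_def)
qed

lemma objective_arc_illuminated:
  assumes "ra > 0" "a \<noteq> b" "a \<noteq> c" "ra + rb \<le> norm (b - a)" "ra + rc \<le> norm (c - a)"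
    and "q \<in> tangent_halfspace a ra (b - a)" "q \<in> tangent_halfspace a ra (c - a)"
    and "q \<in> tangent_halfspace b rb (a - b)" "q \<in> tangent_halfspace c rc (a - c)"
    and p: "p \<in> objective_arc (a, ra) (b, rb) (c, rc)"
    and "D \<in> {(a, ra), (b, rb), (c, rc)}"
  shows "open_segment q p \<inter> disc_interior D = {}"
proof -
  obtain \<alpha> \<beta> where "p \<in> sphere a ra" and coeffs: "\<alpha> \<ge> 0" "\<beta> \<ge> 0"
    and p_cone: "p - a = \<alpha> *\<^sub>R (b - a) + \<beta> *\<^sub>R (c - a)"
    using p by (auto simp: objective_arc_def)
  have "p - a \<noteq> 0" using \<open>p \<in> sphere a ra\<close> \<open>ra > 0\<close> by auto
  moreover have "q \<in> tangent_halfspace a ra (p - a)"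
    unfolding p_cone using assms coeffs by (intro tangent_halfspace_cone) auto
  ultimately have a_free: "open_segment q p \<inter> ball a ra = {}"
    using sphere_point_in_tangent_halfspace[OF \<open>p \<in> sphere a ra\<close>]
      open_segment_Int_ball_eq_empty_if_tangent_halfspace by blast
  have other_disc: "open_segment q p \<inter> ball e r = {}"
    if "a \<noteq> e" "r + ra \<le> norm (a - e)" "q \<in> tangent_halfspace e r (a - e)" for e r
  proof -
    have "p \<in> tangent_halfspace e r (a - e)"
      using \<open>p \<in> sphere a ra\<close> cball_subset_tangent_halfspace[OF that(2)] by auto
    then show ?thesis
      using that open_segment_Int_ball_eq_empty_if_tangent_halfspace[of "a - e"] by auto
  qed
  have "open_segment q p \<inter> ball b rb = {}" "open_segment q p \<inter> ball c rc = {}"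
    using other_disc[of b rb] other_disc[of c rc] assms(2-5,8,9) by (simp_all add: norm_minus_commute add.commute)
  then show ?thesis
    using a_free assms(11) by (auto simp: disc_interior_def)
qed

lemma feasible_region_illuminates_triple_arcs:
  assumes radii: "ra > 0" "rb > 0" "rc > 0"
    and centres: "a \<noteq> b" "b \<noteq> c" "a \<noteq> c"
    and separated: "ra + rb \<le> norm (b - a)" "rb + rc \<le> norm (c - b)" "ra + rc \<le> norm (c - a)"
    and q: "q \<in> feasible_region (a, ra) (b, rb) (c, rc)"
    and p: "p \<in> triple_arcs ((a, ra), (b, rb), (c, rc))"
    and D: "D \<in> triple_discs ((a, ra), (b, rb), (c, rc))"
  shows "open_segment q p \<inter> disc_interior D = {}"
proof -
  have halfspaces:
    "q \<in> tangent_halfspace a ra (b - a)" "q \<in> tangent_halfspace b rb (a - b)"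
    "q \<in> tangent_halfspace b rb (c - b)" "q \<in> tangent_halfspace c rc (b - c)"
    "q \<in> tangent_halfspace a ra (c - a)" "q \<in> tangent_halfspace c rc (a - c)"
    using q slab_subset_tangent_halfspaces centres separated
    unfolding feasible_region_def by blast+
  have separated': "rb + ra \<le> norm (a - b)" "rc + rb \<le> norm (b - c)" "rc + ra \<le> norm (a - c)"
    using separated by (simp_all add: norm_minus_commute add.commute)
  have D': "D \<in> {(a, ra), (b, rb), (c, rc)}" "D \<in> {(b, rb), (a, ra), (c, rc)}"
    "D \<in> {(c, rc), (a, ra), (b, rb)}"
    using D by (auto simp: triple_discs_def)
  from p consider "p \<in> objective_arc (a, ra) (b, rb) (c, rc)"
    | "p \<in> objective_arc (b, rb) (a, ra) (c, rc)" | "p \<in> objective_arc (c, rc) (a, ra) (b, rb)"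
    by (auto simp: triple_arcs_def)
  then show ?thesis
  proof cases
    case 1
    show ?thesis
      by (rule objective_arc_illuminated[OF radii(1) centres(1,3) separated(1,3)
            halfspaces(1,5,2,6) 1 D'(1)])
  next
    case 2
    show ?thesis
      by (rule objective_arc_illuminated[OF radii(2) centres(1)[symmetric] centres(2)
            separated'(1) separated(2) halfspaces(2,3,1,4) 2 D'(2)])
  next
    case 3
    show ?thesis
      by (rule objective_arc_illuminated[OF radii(3) centres(3)[symmetric] centres(2)[symmetric]
            separated'(3,2) halfspaces(6,4,5,3) 3 D'(3)])
  qed
qed

theorem corollary1:
  fixes \<C> :: "disc set" and m :: nat and T :: "nat \<Rightarrow> disc \<times> disc \<times> disc"
  assumes "finite \<C>"
    and "\<forall>D\<in>\<C>. snd D > 0"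
    and "\<forall>D\<in>\<C>. \<forall>E\<in>\<C>. D \<noteq> E \<longrightarrow> disc_set D \<inter> disc_set E = {}"
    and "\<forall>t<m. triple_discs (T t) \<subseteq> \<C>"
    and "\<forall>t<m. \<not> collinear {fst (fst (T t)), fst (fst (snd (T t))), fst (snd (snd (T t)))}"
    and "q \<in> (\<Inter>t\<in>{..<m}. triple_feasible (T t))"
  shows "\<forall>t<m. \<forall>p\<in>triple_arcs (T t). \<forall>D\<in>triple_discs (T t).
           open_segment q p \<inter> disc_interior D = {}"
proof (intro allI impI ballI)
  fix t p D assume t: "t < m" and p: "p \<in> triple_arcs (T t)" and D: "D \<in> triple_discs (T t)"
  obtain a ra b rb c rc where T: "T t = ((a, ra), (b, rb), (c, rc))" by (metis prod.exhaust)
  have discs: "(a, ra) \<in> \<C>" "(b, rb) \<in> \<C>" "(c, rc) \<in> \<C>"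
    using assms(4) t by (auto simp: T triple_discs_def)
  then have radii: "ra > 0" "rb > 0" "rc > 0" using assms(2) by auto
  have "\<not> collinear {a, b, c}" using assms(5)[rule_format, OF t] by (simp add: T)
  then have centres: "a \<noteq> b" "b \<noteq> c" "a \<noteq> c"
    by (auto simp: collinear_2 insert_commute)
  have separated: "ra + rb \<le> norm (b - a)" "rb + rc \<le> norm (c - b)" "ra + rc \<le> norm (c - a)"
    using assms(3)[rule_format, OF discs(1,2)] assms(3)[rule_format, OF discs(2,3)]
      assms(3)[rule_format, OF discs(1,3)] radii centres
    by (simp_all add: disc_set_def norm_diff_ge_if_cballs_disjoint)
  have "q \<in> triple_feasible (T t)" using assms(6) t by blast
  then have "q \<in> feasible_region (a, ra) (b, rb) (c, rc)" by (simp add: T triple_feasible_def)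
  then show "open_segment q p \<inter> disc_interior D = {}"
    using feasible_region_illuminates_triple_arcs[OF radii centres separated] p D by (simp add: T)
qed

end
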